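(* Let $d\ge1$, $k\in\{1,\dots,d\}$, and let $P\subset\{x\in\mathbb{R}^d:x_k>0\}$ be an $n$-dimensional polytope with $0\le n\le d-1$. Suppose there exists a hyperplane $\{x:\pi^\top x=\pi_0\}$ containing $P$ that is not orthogonal to $\bar H=\{x\in\mathbb{R}^d:x_k=0\}$ (i.e. $\pi_k\neq0$). Then: (i) $\mathrm{swp}_k(P)$ is an $(n+1)$-dimensional polytope; (ii) every $l$-face of $\mathrm{swp}_k(P)$ is either an $l$-face of $P$, or an $l$-face of $\mathrm{proj}_k(P)$, or equals $\mathrm{swp}_k(\Gamma^{l-1})$ for some $(l-1)$-face $\Gamma^{l-1}$ of $P$; and (iii) every face of $P$ and every face of $\mathrm{proj}_k(P)$ is a face of $\mathrm{swp}_k(P)$, and $\mathrm{swp}_k(\Gamma)$ is a face of $\mathrm{swp}_k(P)$ for every face $\Gamma$ of $P$.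
   Context: $e_k$ is the $k$-th standard unit vector. For $P\subset\mathbb{R}^d$: $\mathrm{proj}_k(P)=\{p-p_ke_k:p\in P\}$ and $\mathrm{swp}_k(P)=\{p-\theta p_ke_k:p\in P,\theta\in[0,1]\}$. A polytope is the convex hull of finitely many points; its faces are the intersections with supporting hyperplanes (together with the polytope itself), the dimension of a face is that of its affine hull, and an $l$-face is a face of dimension $l$. *)

theory Defs
  imports "HOL-Analysis.Analysis"
begin

text \<open>The coordinate direction e_k is a basis vector b of the Euclidean space;
  x_k is x \<bullet> b.\<close>

definition proj_k :: "'a::euclidean_space \<Rightarrow> 'a set \<Rightarrow> 'a set" where
  "proj_k b P = {p - (p \<bullet> b) *\<^sub>R b | p. p \<in> P}"

definition swp_k :: "'a::euclidean_space \<Rightarrow> 'a set \<Rightarrow> 'a set" where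
  "swp_k b P = {p - (\<theta> * (p \<bullet> b)) *\<^sub>R b | p \<theta>. p \<in> P \<and> 0 \<le> \<theta> \<and> \<theta> \<le> 1}"

definition is_face :: "'a::euclidean_space set \<Rightarrow> 'a set \<Rightarrow> bool" where
  "is_face F P \<longleftrightarrow> F = P \<or>
     (\<exists>a c. a \<noteq> 0 \<and> P \<subseteq> {x. a \<bullet> x \<le> c} \<and> P \<inter> {x. a \<bullet> x = c} \<noteq> {}
            \<and> F = P \<inter> {x. a \<bullet> x = c})"

end

theory Submission
  imports Defs
begin

(* A point of the sweep is p - t e_k with p in P and 0 <= t <= p_k. A linear functional a
   therefore decreases, stays constant or increases along each sweeping segment according to
   the sign of a_k, so a supporting hyperplane of the sweep touches it in a face of P (a_k > 0),
   in a face of the projection (a_k < 0), or in the sweep of a face of P (a_k = 0).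
   Conversely, a functional exposing a face of P can be tilted by a multiple of pi, which is
   constant on P, until its k-th coordinate has any prescribed value; a face of the projection
   is handled in the same way with e_k in place of pi. The dimension grows by one because the
   projection of a point of P lies off the hyperplane pi^T x = pi_0 containing P. *)

lemma mem_swp_k_iff:
  assumes "P \<subseteq> {x. 0 \<le> x \<bullet> b}"
  shows "q \<in> swp_k b P \<longleftrightarrow> (\<exists>p\<in>P. \<exists>t. 0 \<le> t \<and> t \<le> p \<bullet> b \<and> q = p - t *\<^sub>R b)"
proof
  assume "q \<in> swp_k b P"
  then obtain p \<theta> where p: "p \<in> P" "0 \<le> \<theta>" "\<theta> \<le> 1" "q = p - (\<theta> * (p \<bullet> b)) *\<^sub>R b"
    unfolding swp_k_def by blast
  moreover have "0 \<le> p \<bullet> b" using assms p(1) by blast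
  ultimately show "\<exists>p\<in>P. \<exists>t. 0 \<le> t \<and> t \<le> p \<bullet> b \<and> q = p - t *\<^sub>R b"
    by (intro bexI[of _ p] exI[of _ "\<theta> * (p \<bullet> b)"]) (auto simp: mult_left_le_one_le)
next
  assume "\<exists>p\<in>P. \<exists>t. 0 \<le> t \<and> t \<le> p \<bullet> b \<and> q = p - t *\<^sub>R b"
  then obtain p t where p: "p \<in> P" "0 \<le> t" "t \<le> p \<bullet> b" "q = p - t *\<^sub>R b" by blast
  \<comment> \<open>if p \<bullet> b = 0 then also t = 0, so the junk value t / 0 = 0 is harmless\<close>
  have "0 \<le> t / (p \<bullet> b)" "t / (p \<bullet> b) \<le> 1" "t = t / (p \<bullet> b) * (p \<bullet> b)"
    using p by (cases "p \<bullet> b = 0"; simp add: field_simps)+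
  then show "q \<in> swp_k b P" using p unfolding swp_k_def by (metis (mono_tags, lifting) mem_Collect_eq)
qed

lemma swp_k_empty [simp]: "swp_k b {} = {}"
  by (simp add: swp_k_def)

lemma subset_swp_k: "P \<subseteq> swp_k b P"
  unfolding swp_k_def by force

lemma proj_k_subset_swp_k: "proj_k b P \<subseteq> swp_k b P"
  unfolding swp_k_def proj_k_def by force

lemma proj_k_eq_image: "proj_k b P = (\<lambda>x. x - (x \<bullet> b) *\<^sub>R b) ` P"
  by (auto simp: proj_k_def)

lemma linear_proj_k_map: "linear (\<lambda>x. x - (x \<bullet> b) *\<^sub>R b)"
  by (rule linearI) (simp_all add: algebra_simps inner_add_left)

lemma proj_k_convex_hull: "proj_k b (convex hull S) = convex hull (proj_k b S)"
  by (simp add: proj_k_eq_image convex_hull_linear_image[OF linear_proj_k_map])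

lemma proj_k_subset_hyperplane:
  assumes "b \<bullet> b = 1"
  shows "proj_k b P \<subseteq> {x. b \<bullet> x = 0}"
  using assms by (auto simp: proj_k_def inner_diff_right inner_commute)

lemma convex_swp_k:
  assumes nonneg: "P \<subseteq> {x. 0 \<le> x \<bullet> b}" and "convex P"
  shows "convex (swp_k b P)"
  unfolding convex_alt
proof (intro ballI allI impI)
  fix x y and u :: real
  assume "x \<in> swp_k b P" "y \<in> swp_k b P" and u: "0 \<le> u \<and> u \<le> 1"
  then obtain p s q t where p: "p \<in> P" "0 \<le> s" "s \<le> p \<bullet> b" "x = p - s *\<^sub>R b"
    and q: "q \<in> P" "0 \<le> t" "t \<le> q \<bullet> b" "y = q - t *\<^sub>R b"
    using mem_swp_k_iff[OF nonneg] by meson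
  have "(1 - u) *\<^sub>R p + u *\<^sub>R q \<in> P" using \<open>convex P\<close> p q u by (simp add: convex_alt)
  moreover have "0 \<le> (1 - u) * s + u * t" using p q u by simp
  moreover have "(1 - u) * s + u * t \<le> ((1 - u) *\<^sub>R p + u *\<^sub>R q) \<bullet> b"
    using p q u by (simp add: inner_add_left add_mono mult_left_mono)
  moreover have "(1 - u) *\<^sub>R x + u *\<^sub>R y = ((1 - u) *\<^sub>R p + u *\<^sub>R q) - ((1 - u) * s + u * t) *\<^sub>R b"
    unfolding p(4) q(4) by (simp add: algebra_simps)
  ultimately show "(1 - u) *\<^sub>R x + u *\<^sub>R y \<in> swp_k b P"
    using mem_swp_k_iff[OF nonneg] by blast
qed

lemma swp_k_convex_hull:
  assumes nonneg: "convex hull S \<subseteq> {x. 0 \<le> x \<bullet> b}"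
  shows "swp_k b (convex hull S) = convex hull (S \<union> proj_k b S)"
proof
  have "proj_k b S \<subseteq> proj_k b (convex hull S)"
    using hull_subset[of S convex] by (auto simp: proj_k_def)
  then have "S \<union> proj_k b S \<subseteq> swp_k b (convex hull S)"
    using hull_subset[of S convex] subset_swp_k proj_k_subset_swp_k by blast
  then show "convex hull (S \<union> proj_k b S) \<subseteq> swp_k b (convex hull S)"
    by (intro hull_minimal convex_swp_k[OF nonneg]) simp_all
next
  show "swp_k b (convex hull S) \<subseteq> convex hull (S \<union> proj_k b S)"
  proof
    fix q assume "q \<in> swp_k b (convex hull S)"
    then obtain p \<theta> where p: "p \<in> convex hull S" "0 \<le> \<theta>" "\<theta> \<le> 1"
      and q: "q = p - (\<theta> * (p \<bullet> b)) *\<^sub>R b"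
      unfolding swp_k_def by blast
    have "p \<in> convex hull (S \<union> proj_k b S)"
      using p(1) hull_mono[of S "S \<union> proj_k b S"] by blast
    moreover have "p - (p \<bullet> b) *\<^sub>R b \<in> convex hull (S \<union> proj_k b S)"
      using p(1) proj_k_convex_hull[of b S] hull_mono[of "proj_k b S" "S \<union> proj_k b S"]
      by (auto simp: proj_k_def)
    ultimately have "(1 - \<theta>) *\<^sub>R p + \<theta> *\<^sub>R (p - (p \<bullet> b) *\<^sub>R b) \<in> convex hull (S \<union> proj_k b S)"
      using p by (intro convexD) auto
    then show "q \<in> convex hull (S \<union> proj_k b S)"
      by (simp add: q algebra_simps)
  qed
qed

lemma polytope_swp_k:
  assumes "polytope P" and "P \<subseteq> {x. 0 \<le> x \<bullet> b}"
  shows "polytope (swp_k b P)"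
proof -
  obtain S where "finite S" and P: "P = convex hull S"
    using \<open>polytope P\<close> unfolding polytope_def by blast
  then have "finite (S \<union> proj_k b S)" by (simp add: proj_k_eq_image)
  then show ?thesis
    using swp_k_convex_hull[of S b] assms(2) unfolding P polytope_def by blast
qed

lemma swp_k_subset_halfspace:
  assumes nonneg: "P \<subseteq> {x. 0 \<le> x \<bullet> b}" and "0 \<le> a \<bullet> b" and "P \<subseteq> {x. a \<bullet> x \<le> c}"
  shows "swp_k b P \<subseteq> {x. a \<bullet> x \<le> c}"
proof
  fix q assume "q \<in> swp_k b P"
  then obtain p t where "p \<in> P" "0 \<le> t" "q = p - t *\<^sub>R b"
    using mem_swp_k_iff[OF nonneg] by blast
  moreover have "0 \<le> t * (a \<bullet> b)" using \<open>0 \<le> t\<close> \<open>0 \<le> a \<bullet> b\<close> by simp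
  ultimately show "q \<in> {x. a \<bullet> x \<le> c}" using assms(3) by (auto simp: inner_diff_right)
qed

lemma swp_k_inter_hyperplane:
  assumes nonneg: "P \<subseteq> {x. 0 \<le> x \<bullet> b}" and "0 < a \<bullet> b" and "P \<subseteq> {x. a \<bullet> x \<le> c}"
  shows "swp_k b P \<inter> {x. a \<bullet> x = c} = P \<inter> {x. a \<bullet> x = c}"
proof
  show "swp_k b P \<inter> {x. a \<bullet> x = c} \<subseteq> P \<inter> {x. a \<bullet> x = c}"
  proof
    fix q assume q: "q \<in> swp_k b P \<inter> {x. a \<bullet> x = c}"
    then obtain p t where p: "p \<in> P" "0 \<le> t" "q = p - t *\<^sub>R b"
      using mem_swp_k_iff[OF nonneg] by blast
    have "a \<bullet> p - t * (a \<bullet> b) = c" "a \<bullet> p \<le> c" "0 \<le> t * (a \<bullet> b)"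
      using q p assms(2,3) by (auto simp: inner_diff_right)
    then have "t * (a \<bullet> b) = 0" by linarith
    then have "t = 0" using \<open>0 < a \<bullet> b\<close> by simp
    then show "q \<in> P \<inter> {x. a \<bullet> x = c}" using p q by simp
  qed
qed (use subset_swp_k in blast)

lemma swp_k_subset_halfspace_proj_k:
  assumes nonneg: "P \<subseteq> {x. 0 \<le> x \<bullet> b}" and "a \<bullet> b \<le> 0"
    and "proj_k b P \<subseteq> {x. a \<bullet> x \<le> c}"
  shows "swp_k b P \<subseteq> {x. a \<bullet> x \<le> c}"
proof
  fix q assume "q \<in> swp_k b P"
  then obtain p t where p: "p \<in> P" "t \<le> p \<bullet> b" "q = p - t *\<^sub>R b"
    using mem_swp_k_iff[OF nonneg] by blast
  then have "a \<bullet> (p - (p \<bullet> b) *\<^sub>R b) \<le> c" using assms(3) by (auto simp: proj_k_def)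
  moreover have "a \<bullet> q = a \<bullet> (p - (p \<bullet> b) *\<^sub>R b) + (p \<bullet> b - t) * (a \<bullet> b)"
    unfolding p(3) by (simp add: inner_diff_right algebra_simps)
  moreover have "(p \<bullet> b - t) * (a \<bullet> b) \<le> 0"
    using p \<open>a \<bullet> b \<le> 0\<close> by (simp add: mult_nonneg_nonpos)
  ultimately show "q \<in> {x. a \<bullet> x \<le> c}" by simp
qed

lemma swp_k_inter_hyperplane_proj_k:
  assumes nonneg: "P \<subseteq> {x. 0 \<le> x \<bullet> b}" and "a \<bullet> b < 0"
    and "proj_k b P \<subseteq> {x. a \<bullet> x \<le> c}"
  shows "swp_k b P \<inter> {x. a \<bullet> x = c} = proj_k b P \<inter> {x. a \<bullet> x = c}"
proof
  show "swp_k b P \<inter> {x. a \<bullet> x = c} \<subseteq> proj_k b P \<inter> {x. a \<bullet> x = c}"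
  proof
    fix q assume q: "q \<in> swp_k b P \<inter> {x. a \<bullet> x = c}"
    then obtain p t where p: "p \<in> P" "t \<le> p \<bullet> b" "q = p - t *\<^sub>R b"
      using mem_swp_k_iff[OF nonneg] by blast
    define r where "r = p - (p \<bullet> b) *\<^sub>R b"
    have r: "r \<in> proj_k b P" using p(1) unfolding proj_k_def r_def by blast
    have "a \<bullet> q = a \<bullet> r + (p \<bullet> b - t) * (a \<bullet> b)"
      unfolding p(3) r_def by (simp add: inner_diff_right algebra_simps)
    moreover have "a \<bullet> r \<le> c" using r assms(3) by auto
    moreover have "(p \<bullet> b - t) * (a \<bullet> b) \<le> 0"
      using p \<open>a \<bullet> b < 0\<close> by (simp add: mult_nonneg_nonpos)
    moreover have "a \<bullet> q = c" using q by simp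
    ultimately have "(p \<bullet> b - t) * (a \<bullet> b) = 0" by linarith
    then have "t = p \<bullet> b" using \<open>a \<bullet> b < 0\<close> by simp
    then show "q \<in> proj_k b P \<inter> {x. a \<bullet> x = c}" using p q r by (simp add: r_def)
  qed
qed (use proj_k_subset_swp_k in blast)

lemma swp_k_inter_hyperplane_orthogonal:
  assumes "a \<bullet> b = 0"
  shows "swp_k b P \<inter> {x. a \<bullet> x = c} = swp_k b (P \<inter> {x. a \<bullet> x = c})"
proof -
  have a: "a \<bullet> (p - (\<theta> * (p \<bullet> b)) *\<^sub>R b) = a \<bullet> p" for p \<theta>
    using assms by (simp add: inner_diff_right)
  show ?thesis
  proof (intro set_eqI iffI)
    fix q assume "q \<in> swp_k b P \<inter> {x. a \<bullet> x = c}"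
    then obtain p \<theta> where "p \<in> P" "0 \<le> \<theta>" "\<theta> \<le> 1" "q = p - (\<theta> * (p \<bullet> b)) *\<^sub>R b" "a \<bullet> q = c"
      unfolding swp_k_def by blast
    then show "q \<in> swp_k b (P \<inter> {x. a \<bullet> x = c})"
      unfolding swp_k_def using a[of p \<theta>] by auto
  next
    fix q assume "q \<in> swp_k b (P \<inter> {x. a \<bullet> x = c})"
    then obtain p \<theta> where "p \<in> P" "a \<bullet> p = c" "0 \<le> \<theta>" "\<theta> \<le> 1" "q = p - (\<theta> * (p \<bullet> b)) *\<^sub>R b"
      unfolding swp_k_def by blast
    then show "q \<in> swp_k b P \<inter> {x. a \<bullet> x = c}"
      unfolding swp_k_def using a[of p \<theta>] by auto
  qed
qed

lemma is_face_exposedI: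
  assumes "S \<subseteq> {x. a \<bullet> x \<le> c}" and "F = S \<inter> {x. a \<bullet> x = c}" and "F \<noteq> {}"
  shows "is_face F S"
  using assms unfolding is_face_def by (cases "a = 0") auto

lemma is_face_exposedE:
  assumes "is_face F S" and "S \<noteq> {}"
  obtains a c where "S \<subseteq> {x. a \<bullet> x \<le> c}" and "F = S \<inter> {x. a \<bullet> x = c}" and "F \<noteq> {}"
proof (cases "F = S")
  case True
  then show ?thesis using that[of 0 0] \<open>S \<noteq> {}\<close> by simp
next
  case False
  then show ?thesis using assms(1) that unfolding is_face_def by blast
qed

lemma tilt_functional:
  assumes "\<pi> \<bullet> b \<noteq> 0" and "S \<subseteq> {x. \<pi> \<bullet> x = \<pi>0}"
  obtains a' c' where "a' \<bullet> b = \<beta>"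
    and "S \<inter> {x. a' \<bullet> x \<le> c'} = S \<inter> {x. a \<bullet> x \<le> c}"
    and "S \<inter> {x. a' \<bullet> x = c'} = S \<inter> {x. a \<bullet> x = c}"
proof
  define \<mu> where "\<mu> = (\<beta> - a \<bullet> b) / (\<pi> \<bullet> b)"
  show "(a + \<mu> *\<^sub>R \<pi>) \<bullet> b = \<beta>"
    using assms(1) by (simp add: \<mu>_def inner_add_left)
  have "(a + \<mu> *\<^sub>R \<pi>) \<bullet> x = a \<bullet> x + \<mu> * \<pi>0" if "x \<in> S" for x
    using assms(2) that by (auto simp: inner_add_left)
  then show "S \<inter> {x. (a + \<mu> *\<^sub>R \<pi>) \<bullet> x \<le> c + \<mu> * \<pi>0} = S \<inter> {x. a \<bullet> x \<le> c}"
    and "S \<inter> {x. (a + \<mu> *\<^sub>R \<pi>) \<bullet> x = c + \<mu> * \<pi>0} = S \<inter> {x. a \<bullet> x = c}"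
    by auto
qed

lemma aff_dim_swp_k:
  assumes pos: "P \<subseteq> {x. 0 < x \<bullet> b}" and "P \<noteq> {}"
    and "\<pi> \<bullet> b \<noteq> 0" and "P \<subseteq> {x. \<pi> \<bullet> x = \<pi>0}"
  shows "aff_dim (swp_k b P) = aff_dim P + 1"
proof -
  have nonneg: "P \<subseteq> {x. 0 \<le> x \<bullet> b}" using pos by auto
  obtain g where g: "g \<in> P" using \<open>P \<noteq> {}\<close> by auto
  define s where "s = g \<bullet> b"
  define w where "w = g - s *\<^sub>R b"
  have "s > 0" using g pos by (auto simp: s_def)
  have "w \<in> proj_k b P" unfolding proj_k_def w_def s_def using g by blast
  then have "w \<in> swp_k b P" using proj_k_subset_swp_k by blast
  have "affine hull P \<subseteq> {x. \<pi> \<bullet> x = \<pi>0}"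
    using assms(4) by (intro hull_minimal) (auto simp: affine_hyperplane)
  moreover have "\<pi> \<bullet> w = \<pi> \<bullet> g - s * (\<pi> \<bullet> b)" by (simp add: w_def inner_diff_right)
  then have "\<pi> \<bullet> w \<noteq> \<pi>0" using assms(3,4) g \<open>s > 0\<close> by auto
  ultimately have "w \<notin> affine hull P" by blast
  then have "aff_dim (insert w P) = aff_dim P + 1"
    by (simp only: aff_dim_insert[of w P] if_False)
  moreover have "aff_dim (insert w P) \<le> aff_dim (swp_k b P)"
    using \<open>w \<in> swp_k b P\<close> subset_swp_k by (intro aff_dim_subset) blast
  moreover have "swp_k b P \<subseteq> affine hull (insert w P)"
  proof
    fix q assume "q \<in> swp_k b P"
    then obtain p t where p: "p \<in> P" "q = p - t *\<^sub>R b"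
      using mem_swp_k_iff[OF nonneg] by blast
    \<comment> \<open>w - g = -s b\<close>
    have "p + (t / s) *\<^sub>R (w - g) \<in> affine hull (insert w P)"
      by (rule mem_affine_3_minus) (use p g in \<open>auto intro: hull_inc\<close>)
    then show "q \<in> affine hull (insert w P)" using \<open>s > 0\<close> p by (simp add: w_def)
  qed
  then have "aff_dim (swp_k b P) \<le> aff_dim (affine hull (insert w P))"
    by (rule aff_dim_subset)
  ultimately show ?thesis by simp
qed

lemma swp_k_nonempty: "P \<noteq> {} \<Longrightarrow> swp_k b P \<noteq> {}"
  using subset_swp_k by blast

lemma is_face_swp_k_if_is_face_proj_k:
  assumes nonneg: "P \<subseteq> {x. 0 \<le> x \<bullet> b}" and "P \<noteq> {}" and "b \<bullet> b = 1"
    and "is_face G (proj_k b P)"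
  shows "is_face G (swp_k b P)"
proof -
  have "proj_k b P \<noteq> {}" using \<open>P \<noteq> {}\<close> by (simp add: proj_k_eq_image)
  with assms(4) obtain a c where sub: "proj_k b P \<subseteq> {x. a \<bullet> x \<le> c}"
    and G: "G = proj_k b P \<inter> {x. a \<bullet> x = c}" and "G \<noteq> {}"
    by (rule is_face_exposedE)
  have "b \<bullet> b \<noteq> 0" using \<open>b \<bullet> b = 1\<close> by simp
  obtain a' c' where "a' \<bullet> b = -1"
    and le: "proj_k b P \<inter> {x. a' \<bullet> x \<le> c'} = proj_k b P \<inter> {x. a \<bullet> x \<le> c}"
    and eq: "proj_k b P \<inter> {x. a' \<bullet> x = c'} = proj_k b P \<inter> {x. a \<bullet> x = c}"
    using tilt_functional[OF \<open>b \<bullet> b \<noteq> 0\<close> proj_k_subset_hyperplane[OF \<open>b \<bullet> b = 1\<close>, of P], of "-1" a c] by blast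
  have sub': "proj_k b P \<subseteq> {x. a' \<bullet> x \<le> c'}" using sub le by blast
  have "swp_k b P \<subseteq> {x. a' \<bullet> x \<le> c'}"
    using swp_k_subset_halfspace_proj_k[OF nonneg _ sub'] \<open>a' \<bullet> b = -1\<close> by simp
  moreover have "G = swp_k b P \<inter> {x. a' \<bullet> x = c'}"
    using swp_k_inter_hyperplane_proj_k[OF nonneg _ sub'] \<open>a' \<bullet> b = -1\<close> eq G by simp
  ultimately show ?thesis using \<open>G \<noteq> {}\<close> by (rule is_face_exposedI)
qed

context
  fixes P :: "'a::euclidean_space set" and b \<pi> :: 'a and \<pi>0 :: real
  assumes pos: "P \<subseteq> {x. 0 < x \<bullet> b}" and nonempty: "P \<noteq> {}"
    and oblique: "\<pi> \<bullet> b \<noteq> 0" and in_hyperplane: "P \<subseteq> {x. \<pi> \<bullet> x = \<pi>0}"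
begin

private lemma nonneg: "P \<subseteq> {x. 0 \<le> x \<bullet> b}"
  using pos by auto

lemma is_face_swp_k_if_is_face:
  assumes "is_face G P"
  shows "is_face G (swp_k b P)"
proof -
  from assms nonempty obtain a c where sub: "P \<subseteq> {x. a \<bullet> x \<le> c}"
    and G: "G = P \<inter> {x. a \<bullet> x = c}" and "G \<noteq> {}"
    by (rule is_face_exposedE)
  obtain a' c' where "a' \<bullet> b = 1"
    and le: "P \<inter> {x. a' \<bullet> x \<le> c'} = P \<inter> {x. a \<bullet> x \<le> c}"
    and eq: "P \<inter> {x. a' \<bullet> x = c'} = P \<inter> {x. a \<bullet> x = c}"
    using tilt_functional[OF oblique in_hyperplane, of 1 a c] by blast
  have sub': "P \<subseteq> {x. a' \<bullet> x \<le> c'}" using sub le by blast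
  have "swp_k b P \<subseteq> {x. a' \<bullet> x \<le> c'}"
    using swp_k_subset_halfspace[OF nonneg _ sub'] \<open>a' \<bullet> b = 1\<close> by simp
  moreover have "G = swp_k b P \<inter> {x. a' \<bullet> x = c'}"
    using swp_k_inter_hyperplane[OF nonneg _ sub'] \<open>a' \<bullet> b = 1\<close> eq G by simp
  ultimately show ?thesis using \<open>G \<noteq> {}\<close> by (rule is_face_exposedI)
qed

lemma is_face_swp_k_swp_k:
  assumes "is_face G P"
  shows "is_face (swp_k b G) (swp_k b P)"
proof -
  from assms nonempty obtain a c where sub: "P \<subseteq> {x. a \<bullet> x \<le> c}"
    and G: "G = P \<inter> {x. a \<bullet> x = c}" and "G \<noteq> {}"
    by (rule is_face_exposedE)
  obtain a' c' where "a' \<bullet> b = 0"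
    and le: "P \<inter> {x. a' \<bullet> x \<le> c'} = P \<inter> {x. a \<bullet> x \<le> c}"
    and eq: "P \<inter> {x. a' \<bullet> x = c'} = P \<inter> {x. a \<bullet> x = c}"
    using tilt_functional[OF oblique in_hyperplane, of 0 a c] by blast
  have sub': "P \<subseteq> {x. a' \<bullet> x \<le> c'}" using sub le by blast
  have "swp_k b P \<subseteq> {x. a' \<bullet> x \<le> c'}"
    using swp_k_subset_halfspace[OF nonneg _ sub'] \<open>a' \<bullet> b = 0\<close> by simp
  moreover have "swp_k b G = swp_k b P \<inter> {x. a' \<bullet> x = c'}"
    using swp_k_inter_hyperplane_orthogonal[OF \<open>a' \<bullet> b = 0\<close>] eq G by simp
  moreover have "swp_k b G \<noteq> {}" using \<open>G \<noteq> {}\<close> by (rule swp_k_nonempty)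
  ultimately show ?thesis by (rule is_face_exposedI)
qed

lemma is_face_swp_k_cases:
  assumes "is_face F (swp_k b P)"
  shows "is_face F P \<or> is_face F (proj_k b P) \<or>
    (\<exists>G. is_face G P \<and> aff_dim F = aff_dim G + 1 \<and> F = swp_k b G)"
proof -
  from assms swp_k_nonempty[OF nonempty] obtain a c where sub: "swp_k b P \<subseteq> {x. a \<bullet> x \<le> c}"
    and F: "F = swp_k b P \<inter> {x. a \<bullet> x = c}" and "F \<noteq> {}"
    by (rule is_face_exposedE)
  consider "0 < a \<bullet> b" | "a \<bullet> b < 0" | "a \<bullet> b = 0" by linarith
  then show ?thesis
  proof cases
    case 1
    have "P \<subseteq> {x. a \<bullet> x \<le> c}" using sub subset_swp_k by blast
    moreover from this have "F = P \<inter> {x. a \<bullet> x = c}"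
      using F swp_k_inter_hyperplane[OF nonneg 1] by simp
    ultimately have "is_face F P" using \<open>F \<noteq> {}\<close> by (rule is_face_exposedI)
    then show ?thesis by blast
  next
    case 2
    have "proj_k b P \<subseteq> {x. a \<bullet> x \<le> c}" using sub proj_k_subset_swp_k by blast
    moreover from this have "F = proj_k b P \<inter> {x. a \<bullet> x = c}"
      using F swp_k_inter_hyperplane_proj_k[OF nonneg 2] by simp
    ultimately have "is_face F (proj_k b P)" using \<open>F \<noteq> {}\<close> by (rule is_face_exposedI)
    then show ?thesis by blast
  next
    case 3
    define G where "G = P \<inter> {x. a \<bullet> x = c}"
    have "F = swp_k b G" using F swp_k_inter_hyperplane_orthogonal[OF 3] by (simp add: G_def)
    then have "G \<noteq> {}" using \<open>F \<noteq> {}\<close> by auto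
    have "P \<subseteq> {x. a \<bullet> x \<le> c}" using sub subset_swp_k by blast
    then have "is_face G P" using G_def \<open>G \<noteq> {}\<close> by (rule is_face_exposedI)
    moreover have "aff_dim F = aff_dim G + 1"
      unfolding \<open>F = swp_k b G\<close>
      by (rule aff_dim_swp_k[OF _ \<open>G \<noteq> {}\<close> oblique, of \<pi>0]) (use pos in_hyperplane G_def in auto)
    ultimately show ?thesis using \<open>F = swp_k b G\<close> by blast
  qed
qed

end

theorem proposition5:
  fixes P :: "'a::euclidean_space set" and b :: 'a and n :: nat
  assumes "b \<in> Basis"
    and "polytope P"
    and "P \<subseteq> {x. x \<bullet> b > 0}"
    and "aff_dim P = int n"
    and "n \<le> DIM('a) - 1"
    and "\<exists>\<pi> \<pi>0. \<pi> \<bullet> b \<noteq> 0 \<and> P \<subseteq> {x. \<pi> \<bullet> x = \<pi>0}"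
  shows "(polytope (swp_k b P) \<and> aff_dim (swp_k b P) = int n + 1) \<and>
         (\<forall>F l. is_face F (swp_k b P) \<and> aff_dim F = l \<longrightarrow>
           (is_face F P \<and> aff_dim F = l) \<or>
           (is_face F (proj_k b P) \<and> aff_dim F = l) \<or>
           (\<exists>G. is_face G P \<and> aff_dim G = l - 1 \<and> F = swp_k b G)) \<and>
         (\<forall>G. is_face G P \<longrightarrow> is_face G (swp_k b P)) \<and>
         (\<forall>G. is_face G (proj_k b P) \<longrightarrow> is_face G (swp_k b P)) \<and>
         (\<forall>G. is_face G P \<longrightarrow> is_face (swp_k b G) (swp_k b P))"
proof -
  obtain \<pi> \<pi>0 where oblique: "\<pi> \<bullet> b \<noteq> 0" and in_hyperplane: "P \<subseteq> {x. \<pi> \<bullet> x = \<pi>0}"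
    using assms(6) by blast
  have "P \<noteq> {}" using assms(4) by auto
  have nonneg: "P \<subseteq> {x. 0 \<le> x \<bullet> b}" using assms(3) by auto
  have faces: "(is_face F P \<and> aff_dim F = l) \<or> (is_face F (proj_k b P) \<and> aff_dim F = l) \<or>
      (\<exists>G. is_face G P \<and> aff_dim G = l - 1 \<and> F = swp_k b G)"
    if "is_face F (swp_k b P)" and "aff_dim F = l" for F l
    using is_face_swp_k_cases[OF assms(3) \<open>P \<noteq> {}\<close> oblique in_hyperplane that(1)] that(2)
    by fastforce
  have "b \<bullet> b = 1" using assms(1) by simp
  have "aff_dim (swp_k b P) = int n + 1"
    using aff_dim_swp_k[OF assms(3) \<open>P \<noteq> {}\<close> oblique in_hyperplane] assms(4) by simp
  then show ?thesis
    using polytope_swp_k[OF assms(2) nonneg] faces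
      is_face_swp_k_if_is_face[OF assms(3) \<open>P \<noteq> {}\<close> oblique in_hyperplane]
      is_face_swp_k_swp_k[OF assms(3) \<open>P \<noteq> {}\<close> oblique in_hyperplane]
      is_face_swp_k_if_is_face_proj_k[OF nonneg \<open>P \<noteq> {}\<close> \<open>b \<bullet> b = 1\<close>]
    by blast
qed

end
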